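(* Every Brauer field is semi-perfect.
   Context: A field $k$ is a Brauer field if for every $d\ge 1$ there is a number $N_k(d)$ such that every equation $a_1x_1^d+\cdots+a_nx_n^d=0$ with $n>N_k(d)$ and $a_i\in k$ has a non-trivial solution in $k^n$. A field $k$ is semi-perfect if it has characteristic $0$, or it has characteristic $p>0$ and the degree $[k:k^{p^n}]$ is finite for all $n\ge 1$. *)

theory Defs
  imports Main
begin

definition brauer_field :: "'a::field itself \<Rightarrow> bool" where
  "brauer_field _ \<longleftrightarrow>
     (\<forall>d::nat. d \<ge> 1 \<longrightarrow> (\<exists>N::nat. \<forall>n>N. \<forall>a::nat \<Rightarrow> 'a.
        \<exists>x::nat \<Rightarrow> 'a. (\<exists>i<n. x i \<noteq> 0) \<and> (\<Sum>i<n. a i * x i ^ d) = 0))"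

definition pow_subfield :: "nat \<Rightarrow> 'a::field set" where
  "pow_subfield m = {y. \<exists>x. y = x ^ m}"

text \<open>[k : F] finite: k is a finite-dimensional vector space over the subfield F,
  i.e. there is a finite spanning set S with coefficients in F.\<close>
definition finite_degree_over :: "'a::field set \<Rightarrow> bool" where
  "finite_degree_over F \<longleftrightarrow>
     (\<exists>S::'a set. finite S \<and> (\<forall>z. \<exists>c. (\<forall>s\<in>S. c s \<in> F) \<and> z = (\<Sum>s\<in>S. c s * s)))"

definition semi_perfect :: "'a::field itself \<Rightarrow> bool" where
  "semi_perfect _ \<longleftrightarrow>
     CHAR('a) = 0 \<or>
     (CHAR('a) > 0 \<and> (\<forall>n::nat. n \<ge> 1 \<longrightarrow> finite_degree_over (pow_subfield (CHAR('a) ^ n) :: 'a set)))"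

end

theory Submission
  imports Defs "HOL-Computational_Algebra.Primes"
begin

text \<open>Let \<open>p = CHAR('k) > 0\<close> and \<open>q = p^n\<close>. The set \<open>k^q\<close> of \<open>q\<close>-th powers is a subfield
  (negation is a \<open>q\<close>-th power because \<open>q\<close> is odd or \<open>-1 = 1\<close>). If \<open>s\<^sub>1, \<dots>, s\<^sub>m\<close> are
  linearly independent over \<open>k^q\<close>, then the diagonal form \<open>s\<^sub>1 x\<^sub>1^q + \<dots> + s\<^sub>m x\<^sub>m^q\<close> has only
  the trivial zero, since its values are exactly the \<open>k^q\<close>-combinations of the \<open>s\<^sub>i\<close>.
  Hence the Brauer bound for degree \<open>q\<close> bounds the size of independent sets, and an
  independent set of maximal size spans \<open>k\<close> over \<open>k^q\<close>.\<close>

definition indep_over :: "'a::field set \<Rightarrow> 'a set \<Rightarrow> bool" where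
  "indep_over F S \<longleftrightarrow>
     (\<forall>c. (\<forall>s\<in>S. c s \<in> F) \<and> (\<Sum>s\<in>S. c s * s) = 0 \<longrightarrow> (\<forall>s\<in>S. c s = 0))"

lemma in_span_if_not_indep_over_insert:
  fixes F :: "'a::field set"
  assumes divide_closed: "\<And>a b. a \<in> F \<Longrightarrow> b \<in> F \<Longrightarrow> a / b \<in> F"
    and uminus_closed: "\<And>a. a \<in> F \<Longrightarrow> - a \<in> F"
    and "finite S" and indep: "indep_over F S" and dep: "\<not> indep_over F (insert z S)"
  shows "\<exists>c. (\<forall>s\<in>S. c s \<in> F) \<and> z = (\<Sum>s\<in>S. c s * s)"
proof -
  have "z \<notin> S"
    using indep dep by (auto simp: insert_absorb)
  obtain c where c_in_F: "\<forall>s\<in>insert z S. c s \<in> F"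
    and rel: "(\<Sum>s\<in>insert z S. c s * s) = 0" and nontrivial: "\<exists>s\<in>insert z S. c s \<noteq> 0"
    using dep unfolding indep_over_def by blast
  have rel_split: "c z * z + (\<Sum>s\<in>S. c s * s) = 0"
    using rel \<open>z \<notin> S\<close> \<open>finite S\<close> by simp
  have "c z \<noteq> 0"
  proof
    assume "c z = 0"
    then have "\<forall>s\<in>S. c s = 0"
      using indep c_in_F rel_split unfolding indep_over_def by simp
    with \<open>c z = 0\<close> nontrivial show False by auto
  qed
  have "(\<Sum>s\<in>S. - (c s / c z) * s) = - (1 / c z) * (\<Sum>s\<in>S. c s * s)"
    by (simp add: sum_distrib_left)
  also have "(\<Sum>s\<in>S. c s * s) = - (c z * z)"
    using rel_split by (simp add: eq_neg_iff_add_eq_0 add.commute)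
  finally have "(\<Sum>s\<in>S. - (c s / c z) * s) = z"
    using \<open>c z \<noteq> 0\<close> by simp
  then show ?thesis
    using c_in_F divide_closed uminus_closed by (intro exI[of _ "\<lambda>s. - (c s / c z)"]) auto
qed

lemma finite_degree_over_if_card_indep_over_bounded:
  fixes F :: "'a::field set"
  assumes "0 \<in> F" and "1 \<in> F"
    and divide_closed: "\<And>a b. a \<in> F \<Longrightarrow> b \<in> F \<Longrightarrow> a / b \<in> F"
    and uminus_closed: "\<And>a. a \<in> F \<Longrightarrow> - a \<in> F"
    and bounded: "\<And>S. finite S \<Longrightarrow> indep_over F S \<Longrightarrow> card S \<le> N"
  shows "finite_degree_over F"
proof -
  let ?indep = "\<lambda>S. finite S \<and> indep_over F S"
  have "?indep {}"
    by (simp add: indep_over_def)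
  moreover have "\<forall>S. ?indep S \<longrightarrow> card S < Suc N"
    using bounded by (simp add: less_Suc_eq_le)
  ultimately obtain S where "finite S" and indep: "indep_over F S"
    and maximal: "\<And>T. ?indep T \<Longrightarrow> card T \<le> card S"
    using ex_has_greatest_nat[of ?indep "{}" card "Suc N"] by blast
  have "\<exists>c. (\<forall>s\<in>S. c s \<in> F) \<and> z = (\<Sum>s\<in>S. c s * s)" for z
  proof (cases "z \<in> S")
    case True
    then have "z = (\<Sum>s\<in>S. of_bool (s = z) * s)"
      using \<open>finite S\<close> by simp
    then show ?thesis
      using \<open>0 \<in> F\<close> \<open>1 \<in> F\<close> by (intro exI[of _ "\<lambda>s. of_bool (s = z)"]) auto
  next
    case False
    have "\<not> indep_over F (insert z S)"
      using maximal[of "insert z S"] False \<open>finite S\<close> by auto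
    then show ?thesis
      using in_span_if_not_indep_over_insert[OF divide_closed uminus_closed \<open>finite S\<close> indep]
      by blast
  qed
  then show ?thesis
    unfolding finite_degree_over_def using \<open>finite S\<close> by blast
qed

lemma diagonal_form_anisotropic_if_indep_over_pow_subfield:
  fixes h x :: "nat \<Rightarrow> 'a::field"
  assumes indep: "indep_over (pow_subfield d) S"
    and h: "bij_betw h {..<m} S"
    and zero: "(\<Sum>i<m. h i * x i ^ d) = 0"
  shows "\<forall>i<m. x i = 0"
proof -
  define c where "c s = x (inv_into {..<m} h s) ^ d" for s
  have c_h: "c (h i) = x i ^ d" if "i < m" for i
    using h that unfolding c_def bij_betw_def by (simp add: inv_into_f_f)
  have "(\<Sum>s\<in>S. c s * s) = (\<Sum>i<m. c (h i) * h i)"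
    using sum.reindex_bij_betw[OF h, of "\<lambda>s. c s * s"] by simp
  also have "\<dots> = 0"
    using zero by (simp add: c_h mult.commute)
  finally have "(\<Sum>s\<in>S. c s * s) = 0" .
  moreover have "\<forall>s\<in>S. c s \<in> pow_subfield d"
    unfolding c_def pow_subfield_def by blast
  ultimately have "\<forall>s\<in>S. c s = 0"
    using indep unfolding indep_over_def by blast
  then show ?thesis
    using h c_h unfolding bij_betw_def by auto
qed

lemma card_indep_over_pow_subfield_le:
  fixes S :: "'a::field set"
  assumes isotropic: "\<forall>n>N. \<forall>a::nat \<Rightarrow> 'a.
      \<exists>x::nat \<Rightarrow> 'a. (\<exists>i<n. x i \<noteq> 0) \<and> (\<Sum>i<n. a i * x i ^ d) = 0"
    and "finite S" and indep: "indep_over (pow_subfield d) S"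
  shows "card S \<le> N"
proof (rule ccontr)
  assume "\<not> card S \<le> N"
  obtain h where h: "bij_betw h {..<card S} S"
    using ex_bij_betw_nat_finite[OF \<open>finite S\<close>] by (auto simp: atLeast0LessThan)
  from isotropic \<open>\<not> card S \<le> N\<close> obtain x where "\<exists>i<card S. x i \<noteq> 0"
    and "(\<Sum>i<card S. h i * x i ^ d) = 0"
    by (meson not_le)
  with diagonal_form_anisotropic_if_indep_over_pow_subfield[OF indep h] show False
    by blast
qed

lemma minus_power_CHAR_power:
  fixes x :: "'a::ring_1"
  assumes "prime CHAR('a)"
  shows "(- x) ^ (CHAR('a) ^ n) = - (x ^ (CHAR('a) ^ n))"
proof (cases "CHAR('a) = 2")
  case True
  then show ?thesis
    by (simp add: uminus_CHAR_2)
next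
  case False
  then have "CHAR('a) > 2"
    using prime_ge_2_nat[OF assms] by linarith
  then have "odd (CHAR('a) ^ n)"
    using prime_odd_nat[OF assms] by simp
  then show ?thesis
    by simp
qed

lemma zero_in_pow_subfield: "0 < m \<Longrightarrow> 0 \<in> pow_subfield m"
  unfolding pow_subfield_def by (auto intro!: exI[of _ 0])

lemma one_in_pow_subfield: "1 \<in> pow_subfield m"
  unfolding pow_subfield_def by (auto intro!: exI[of _ 1])

lemma divide_in_pow_subfield:
  "a \<in> pow_subfield m \<Longrightarrow> b \<in> pow_subfield m \<Longrightarrow> a / b \<in> pow_subfield m"
  unfolding pow_subfield_def by (auto simp flip: power_divide)

lemma uminus_in_pow_subfield_CHAR_power:
  fixes a :: "'a::field"
  assumes "CHAR('a) > 0" and "a \<in> pow_subfield (CHAR('a) ^ n)"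
  shows "- a \<in> pow_subfield (CHAR('a) ^ n)"
proof -
  obtain x where "a = x ^ (CHAR('a) ^ n)"
    using assms(2) unfolding pow_subfield_def by blast
  then have "- a = (- x) ^ (CHAR('a) ^ n)"
    using minus_power_CHAR_power[OF prime_CHAR_semidom[OF assms(1)]] by simp
  then show ?thesis
    unfolding pow_subfield_def by blast
qed

theorem proposition2p9:
  assumes "brauer_field TYPE('k::field)"
  shows "semi_perfect TYPE('k)"
proof (cases "CHAR('k) = 0")
  case True
  then show ?thesis
    unfolding semi_perfect_def by simp
next
  case False
  then have pos: "CHAR('k) > 0"
    by simp
  have "finite_degree_over (pow_subfield (CHAR('k) ^ n) :: 'k set)" for n
  proof -
    have "CHAR('k) ^ n \<ge> 1"
      using pos by simp
    then obtain N where isotropic: "\<forall>m>N. \<forall>a::nat \<Rightarrow> 'k.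
        \<exists>x. (\<exists>i<m. x i \<noteq> 0) \<and> (\<Sum>i<m. a i * x i ^ (CHAR('k) ^ n)) = 0"
      using assms unfolding brauer_field_def by blast
    show ?thesis
      using pos by (intro finite_degree_over_if_card_indep_over_bounded[OF
          zero_in_pow_subfield one_in_pow_subfield divide_in_pow_subfield
          uminus_in_pow_subfield_CHAR_power card_indep_over_pow_subfield_le[OF isotropic]]) auto
  qed
  then show ?thesis
    unfolding semi_perfect_def using pos by simp
qed

end
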